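(* Let $d\ge1$, $z\ge0$, let $0<\varphi_1\le\cdots\le\varphi_d$ and let $\tilde v_1,\ldots,\tilde v_d\in\mathbb C$ be nonzero. For $\lambda>0$ with $\lambda\notin\{\varphi_1,\dots,\varphi_d\}$ define $$f(\lambda)=\lambda^2\sum_{m=1}^d\frac{\varphi_m|\tilde v_m|^2}{(\lambda-\varphi_m)^2}-\lambda+z,\qquad g(\lambda)=1-\sum_{m=1}^d\frac{\varphi_m|\tilde v_m|^2}{\lambda-\varphi_m}-\frac{z}{\lambda}-\log\lambda.$$ If $f$ has roots $0<\lambda_1\le\lambda_2$ both lying in an interval $(\varphi_{L-1},\varphi_L)$ for some $L$, then $g(\lambda_1)\ge g(\lambda_2)$.
   Context: Standing assumption of the paper for this lemma: all indices belong to the support $\mathcal S=\{m:\varphi_m|\tilde v_m|^2\ne0\}$, i.e. $\mathcal S=\{1,\ldots,d\}$. Here $\varphi_m$ are the eigenvalues of a Hermitian positive semi-definite matrix and $\tilde v_m$ the coordinates of a vector in its eigenbasis; $g(\lambda)$ is the value of the objective $\mathbf y^{\mathsf H}\mathbf y-\log((\mathbf y+\mathbf v)^{\mathsf H}\mathbf U(\mathbf y+\mathbf v)+z)$ at the stationary point associated with a root $\lambda$ of $f$ (this interpretation is not needed for the statement). *)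

theory Defs
  imports "HOL-Analysis.Analysis"
begin

definition f_fun :: "nat \<Rightarrow> (nat \<Rightarrow> real) \<Rightarrow> (nat \<Rightarrow> complex) \<Rightarrow> real \<Rightarrow> real \<Rightarrow> real" where
  "f_fun d phi v z lam =
     lam\<^sup>2 * (\<Sum>m = 1..d. phi m * (cmod (v m))\<^sup>2 / (lam - phi m)\<^sup>2) - lam + z"

definition g_fun :: "nat \<Rightarrow> (nat \<Rightarrow> real) \<Rightarrow> (nat \<Rightarrow> complex) \<Rightarrow> real \<Rightarrow> real \<Rightarrow> real" where
  "g_fun d phi v z lam =
     1 - (\<Sum>m = 1..d. phi m * (cmod (v m))\<^sup>2 / (lam - phi m)) - z / lam - ln lam"

end

theory Submission
  imports Defs
begin

text \<open>
  Between the roots there is no pole, and there \<open>f(\<lambda>) = \<lambda> h(\<lambda>)\<close> with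
  \<open>h(\<lambda>) = \<Sum>\<^sub>m \<phi>\<^sub>m |v\<^sub>m|\<^sup>2 \<lambda> / (\<lambda> - \<phi>\<^sub>m)\<^sup>2 + z / \<lambda> - 1\<close>, while \<open>g' = h / \<lambda>\<close>.
  For \<open>\<lambda> > 0\<close> and \<open>\<phi> \<ge> 0\<close> each \<open>\<lambda> / (\<lambda> - \<phi>)\<^sup>2\<close> is convex away from its pole (its
  second derivative is \<open>(2\<lambda> + 4\<phi>) / (\<lambda> - \<phi>)\<^sup>4\<close>), and so is \<open>z / \<lambda>\<close>; hence \<open>h\<close> is
  convex on \<open>[\<lambda>\<^sub>1, \<lambda>\<^sub>2]\<close>. It vanishes at both endpoints, so \<open>h \<le> 0\<close> in between,
  and \<open>g\<close> is non-increasing there.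
\<close>

definition h_fun :: "nat \<Rightarrow> (nat \<Rightarrow> real) \<Rightarrow> (nat \<Rightarrow> complex) \<Rightarrow> real \<Rightarrow> real \<Rightarrow> real" where
  "h_fun d phi v z lam =
     (\<Sum>m = 1..d. phi m * (cmod (v m))\<^sup>2 * (lam / (lam - phi m)\<^sup>2)) + z * inverse lam - 1"

lemma f_fun_eq_mult_h_fun:
  assumes "lam \<noteq> 0"
  shows "f_fun d phi v z lam = lam * h_fun d phi v z lam"
  using assms
  by (simp add: f_fun_def h_fun_def algebra_simps sum_distrib_left power2_eq_square)

lemma has_real_derivative_g_fun:
  assumes "0 < lam" and "\<forall>m\<in>{1..d}. phi m \<noteq> lam"
  shows "(g_fun d phi v z has_real_derivative h_fun d phi v z lam / lam) (at lam)"
proof -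
  have "(g_fun d phi v z has_real_derivative
      (\<Sum>m = 1..d. phi m * (cmod (v m))\<^sup>2 / (lam - phi m)\<^sup>2) + z / lam\<^sup>2 - 1 / lam) (at lam)"
    unfolding g_fun_def[abs_def] using assms
    by (auto intro!: derivative_eq_intros simp: sum_negf power2_eq_square)
  moreover have "h_fun d phi v z lam / lam =
      (\<Sum>m = 1..d. phi m * (cmod (v m))\<^sup>2 * (lam / (lam - phi m)\<^sup>2)) / lam
      + z * inverse lam / lam - 1 / lam"
    unfolding h_fun_def by (simp add: diff_divide_distrib add_divide_distrib)
  moreover have "(\<Sum>m = 1..d. phi m * (cmod (v m))\<^sup>2 * (lam / (lam - phi m)\<^sup>2)) / lam
      = (\<Sum>m = 1..d. phi m * (cmod (v m))\<^sup>2 / (lam - phi m)\<^sup>2)"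
    using assms by (simp add: sum_divide_distrib)
  moreover have "z * inverse lam / lam = z / lam\<^sup>2"
    by (simp add: power2_eq_square divide_inverse)
  ultimately show ?thesis by simp
qed

lemma convex_on_pole_term:
  fixes p :: real
  assumes "convex C" "C \<subseteq> {0<..}" "0 \<le> p" "p \<notin> C"
  shows "convex_on C (\<lambda>x. x / (x - p)\<^sup>2)"
proof (rule f''_ge0_imp_convex[OF \<open>convex C\<close>])
  fix x assume "x \<in> C"
  with assms have "x > 0" "x - p \<noteq> 0" by auto
  show "((\<lambda>x. x / (x - p)\<^sup>2) has_real_derivative - (x + p) / (x - p) ^ 3) (at x)"
    using \<open>x - p \<noteq> 0\<close>
    by (auto intro!: derivative_eq_intros simp: divide_simps)
      (simp add: eval_nat_numeral algebra_simps)
  show "((\<lambda>x. - (x + p) / (x - p) ^ 3) has_real_derivative (2 * x + 4 * p) / (x - p) ^ 4) (at x)"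
    using \<open>x - p \<noteq> 0\<close>
    by (auto intro!: derivative_eq_intros simp: divide_simps)
      (simp add: eval_nat_numeral algebra_simps)
  show "0 \<le> (2 * x + 4 * p) / (x - p) ^ 4"
    using \<open>x > 0\<close> \<open>0 \<le> p\<close> by simp
qed

lemma convex_on_sum_fun:
  fixes f :: "'i \<Rightarrow> 'a::real_vector \<Rightarrow> real"
  assumes "finite I" "convex C" "\<And>i. i \<in> I \<Longrightarrow> convex_on C (f i)"
  shows "convex_on C (\<lambda>x. \<Sum>i\<in>I. f i x)"
  using assms by (induction I rule: finite_induct) (auto simp: convex_on_const)

lemma convex_on_h_fun:
  assumes "convex C" "C \<subseteq> {0<..}" "0 \<le> z"
    and "\<forall>m\<in>{1..d}. 0 \<le> phi m \<and> phi m \<notin> C"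
  shows "convex_on C (h_fun d phi v z)"
proof -
  have "convex_on C (\<lambda>x. \<Sum>m = 1..d. phi m * (cmod (v m))\<^sup>2 * (x / (x - phi m)\<^sup>2))"
    using assms
    by (intro convex_on_sum_fun convex_on_cmul convex_on_pole_term) auto
  moreover have "convex_on C (\<lambda>x. z * inverse x)"
    using assms by (intro convex_on_cmul convex_on_inverse)
  ultimately show ?thesis
    unfolding h_fun_def[abs_def]
    by (intro convex_on_diff convex_on_add) (auto simp: concave_on_const \<open>convex C\<close>)
qed

lemma g_fun_antimono_between_roots:
  assumes "0 < lam1" "lam1 \<le> lam2" "0 \<le> z"
    and "\<forall>m\<in>{1..d}. 0 \<le> phi m \<and> phi m \<notin> {lam1..lam2}"
    and "f_fun d phi v z lam1 = 0" "f_fun d phi v z lam2 = 0"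
  shows "g_fun d phi v z lam2 \<le> g_fun d phi v z lam1"
proof (rule DERIV_nonpos_imp_nonincreasing[OF \<open>lam1 \<le> lam2\<close>])
  fix x assume x: "lam1 \<le> x" "x \<le> lam2"
  have "convex_on {lam1..lam2} (h_fun d phi v z)"
    using assms by (intro convex_on_h_fun) auto
  moreover have "h_fun d phi v z lam1 = 0" "h_fun d phi v z lam2 = 0"
    using assms f_fun_eq_mult_h_fun[of lam1 d phi v z] f_fun_eq_mult_h_fun[of lam2 d phi v z]
    by auto
  ultimately have "h_fun d phi v z x \<le> 0"
    using convex_onD_Icc'[of lam1 lam2 "h_fun d phi v z" x] x by simp
  moreover have "(g_fun d phi v z has_real_derivative h_fun d phi v z x / x) (at x)"
    using assms x by (intro has_real_derivative_g_fun) auto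
  ultimately show "\<exists>y. (g_fun d phi v z has_real_derivative y) (at x) \<and> y \<le> 0"
    using assms x by (auto intro!: divide_nonpos_pos)
qed

lemma sorted_notin_gap:
  fixes phi :: "nat \<Rightarrow> real"
  assumes mono: "\<forall>m\<in>{1..<d}. phi m \<le> phi (Suc m)"
    and L: "L \<in> {1..d+1}" and lower: "L = 1 \<or> phi (L - 1) < a"
    and upper: "L = d + 1 \<or> b < phi L" and m: "m \<in> {1..d}"
  shows "phi m \<notin> {a..b}"
proof (cases "m < L")
  case True
  with L m have "m \<le> L - 1" "{m..<L - 1} \<subseteq> {1..<d}" "L \<noteq> 1" by auto
  then have "phi m \<le> phi (L - 1)" "phi (L - 1) < a"
    using mono lower by (auto intro: lift_Suc_mono_le_ivl)
  then show ?thesis by simp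
next
  case False
  with L m have "L \<le> m" "{L..<m} \<subseteq> {1..<d}" "L \<noteq> d + 1" by auto
  then have "phi L \<le> phi m" "b < phi L"
    using mono upper by (auto intro: lift_Suc_mono_le_ivl)
  then show ?thesis by simp
qed

theorem lemma4:
  fixes d L :: nat and phi :: "nat \<Rightarrow> real" and v :: "nat \<Rightarrow> complex"
    and z lam1 lam2 :: real
  assumes "d \<ge> 1" and "z \<ge> 0"
    and "\<forall>m\<in>{1..d}. 0 < phi m"
    and "\<forall>m\<in>{1..<d}. phi m \<le> phi (Suc m)"
    and "\<forall>m\<in>{1..d}. v m \<noteq> 0"
    and "L \<in> {1..d+1}"
    and "0 < lam1" and "lam1 \<le> lam2"
    and "f_fun d phi v z lam1 = 0" and "f_fun d phi v z lam2 = 0"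
    and "L = 1 \<or> phi (L - 1) < lam1"
    and "L = d + 1 \<or> lam2 < phi L"
  shows "g_fun d phi v z lam1 \<ge> g_fun d phi v z lam2"
proof (rule g_fun_antimono_between_roots)
  show "\<forall>m\<in>{1..d}. 0 \<le> phi m \<and> phi m \<notin> {lam1..lam2}"
    using assms(3) sorted_notin_gap[OF assms(4,6,11,12)] by (simp add: less_imp_le)
qed (fact assms)+

end
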